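(* Let $a:[0,\infty)\to[0,\infty)$ be non-negative and non-decreasing, let $f(x)=\exp\bigl(-\int_0^x a(y)\,dy\bigr)$ for $x\ge 0$ (so that $a=-f'/f$), let $\mathcal L(\gamma)=\int_0^\infty e^{-\gamma x}f(x)\,dx$ and $\gamma_{\min}=\inf\{\gamma\in\mathbb R:\mathcal L(\gamma)<\infty\}$ (so $\gamma_{\min}=-\lim_{x\to\infty}a(x)\in[-\infty,0]$). Fix $s\ge 1$. The stationary distribution of the controlled $s$-server system described in the context exists (i) for the global control, i.e. admission probabilities $p_s(k)$ with $p_s(0)\cdots p_s(n)=f\bigl(\tfrac{n+1}{\sqrt s}\bigr)$ for all $n\in\mathbb N_0$, if and only if $0\le\rho<e^{-\gamma_{\min}/\sqrt s}$ (and $e^{-\gamma_{\min}/\sqrt s}=1-\gamma_{\min}/\sqrt s+O(1/s)$); (ii) for the local control, i.e. $p_s(k)=\bigl(1+\tfrac{1}{\sqrt s}a\bigl(\tfrac{k+1}{\sqrt s}\bigr)\bigr)^{-1}$ for $k\in\mathbb N_0$, if and only if $0\le\rho<1-\gamma_{\min}/\sqrt s$. (Here an upper bound equal to $+\infty$ means that the stationary distribution exists for all $\rho\ge0$.)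
   Context: The system: $s$ parallel servers, customers arrive according to a Poisson process of rate $\lambda=s\rho$, service times are i.i.d. exponential with mean $1$, all interarrival and service times independent. A customer who upon arrival finds all servers busy and $k$ other customers waiting is admitted with probability $p_s(k)$ and rejected otherwise; customers finding an idle server are always admitted. The number of customers in the system is then a birth–death process with birth rate $\lambda$ in states $0,\dots,s-1$, birth rate $\lambda p_s(k-s)$ in states $k\ge s$, and death rate $\min\{k,s\}$ in state $k$. Its stationary distribution, when it exists, is $\pi_k=\pi_0(s\rho)^k/k!$ for $0\le k\le s$ and $\pi_k=\pi_0\frac{s^s\rho^k}{s!}\prod_{i=0}^{k-s-1}p_s(i)$ for $k>s$, with $\pi_0^{-1}=\sum_{k=0}^s\frac{(s\rho)^k}{k!}+\frac{(s\rho)^s}{s!}F_s(\rho)$, where $F_s(\rho)=\sum_{n=0}^\infty p_s(0)\cdots p_s(n)\,\rho^{n+1}$; it exists if and only if $F_s(\rho)<\infty$. *)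

theory Defs
  imports "HOL-Analysis.Analysis" "HOL-Library.Landau_Symbols"
begin

definition ctrl_f :: "(real \<Rightarrow> real) \<Rightarrow> real \<Rightarrow> real" where
  "ctrl_f a x = exp (- integral {0..x} a)"

definition laplace_finite :: "(real \<Rightarrow> real) \<Rightarrow> real \<Rightarrow> bool" where
  "laplace_finite a \<gamma> \<longleftrightarrow>
     (\<integral>\<^sup>+ x \<in> {0..}. ennreal (exp (- \<gamma> * x) * ctrl_f a x) \<partial>lborel) < \<infinity>"

definition gamma_min :: "(real \<Rightarrow> real) \<Rightarrow> ereal" where
  "gamma_min a = Inf {ereal \<gamma> | \<gamma>. laplace_finite a \<gamma>}"

text \<open>Birth rates of the controlled s-server queue (lambda = s rho), death rates min k s.\<close>
definition queue_birth :: "nat \<Rightarrow> real \<Rightarrow> (nat \<Rightarrow> real) \<Rightarrow> nat \<Rightarrow> real" where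
  "queue_birth s \<rho> p k = (if k < s then real s * \<rho> else real s * \<rho> * p (k - s))"

definition queue_death :: "nat \<Rightarrow> nat \<Rightarrow> real" where
  "queue_death s k = real (min k s)"

text \<open>Stationary distribution of a birth-death process on nat with birth rates b and
  death rates d: a probability vector pi with pi Q = 0 (global balance equations).\<close>
definition bd_stationary :: "(nat \<Rightarrow> real) \<Rightarrow> (nat \<Rightarrow> real) \<Rightarrow> (nat \<Rightarrow> real) \<Rightarrow> bool" where
  "bd_stationary b d \<pi> \<longleftrightarrow>
     (\<forall>k. 0 \<le> \<pi> k) \<and> \<pi> sums 1 \<and>
     (\<forall>k. (if k = 0 then 0 else \<pi> (k - 1) * b (k - 1)) + \<pi> (k + 1) * d (k + 1)
           = \<pi> k * (b k + d k))"

definition stationary_exists :: "nat \<Rightarrow> real \<Rightarrow> (nat \<Rightarrow> real) \<Rightarrow> bool" where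
  "stationary_exists s \<rho> p \<longleftrightarrow> (\<exists>\<pi>. bd_stationary (queue_birth s \<rho> p) (queue_death s) \<pi>)"

end

theory Submission
  imports Defs "HOL-Real_Asymp.Real_Asymp"
begin

text \<open>A birth-death process with positive death rates has a stationary distribution iff the
  detailed-balance weights \<open>\<Prod>i<k. b i / d (i + 1)\<close> are non-negative and summable. For the
  controlled queue the weights are, from state \<open>s\<close> on, a constant multiple of
  \<open>\<rho>\<^sup>n p(0)\<cdots>p(n-1)\<close>. Write \<open>\<alpha> = sup a\<close>, so that \<open>\<gamma>\<^sub>m\<^sub>i\<^sub>n = -\<alpha>\<close>. Under the global control
  this product is \<open>\<rho>\<^sup>n exp (- \<integral>\<^sub>0\<^sup>n\<^sup>/\<^sup>\<surd>\<^sup>s a)\<close>; as \<open>a\<close> is non-decreasing the integral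
  eventually grows at least like \<open>c n/\<surd>s\<close> for every \<open>c < \<alpha>\<close> and at most like \<open>\<alpha> n/\<surd>s\<close>,
  so the series converges iff \<open>\<surd>s ln \<rho> < \<alpha>\<close>. Under the local control consecutive terms have
  ratio \<open>\<rho> / (1 + a((k+1)/\<surd>s)/\<surd>s)\<close>, which tends to \<open>\<rho> / (1 + \<alpha>/\<surd>s)\<close> from above, so the
  ratio test and its converse give convergence iff \<open>\<rho> < 1 + \<alpha>/\<surd>s\<close>. The same comparison of the
  integral with linear functions shows \<open>\<L>(\<gamma>) < \<infinity>\<close> iff \<open>-\<gamma> < \<alpha>\<close>.\<close>

definition bd_weight :: "(nat \<Rightarrow> real) \<Rightarrow> (nat \<Rightarrow> real) \<Rightarrow> nat \<Rightarrow> real" where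
  "bd_weight b d k = (\<Prod>i<k. b i / d (Suc i))"

lemma bd_weight_Suc: "bd_weight b d (Suc k) = bd_weight b d k * (b k / d (Suc k))"
  by (simp add: bd_weight_def lessThan_Suc)

lemma bd_stationary_eq_weight:
  assumes d0: "d 0 = 0" and d_pos: "\<And>k. d (Suc k) > 0" and "bd_stationary b d \<pi>"
  shows "\<pi> k = \<pi> 0 * bd_weight b d k"
proof -
  have balance: "\<And>k. (if k = 0 then 0 else \<pi> (k - 1) * b (k - 1)) + \<pi> (k + 1) * d (k + 1)
      = \<pi> k * (b k + d k)"
    using assms(3) unfolding bd_stationary_def by blast
  have detailed_balance: "\<pi> (Suc k) * d (Suc k) = \<pi> k * b k" for k
  proof (induction k)
    case 0
    show ?case using balance[of 0] d0 by simp
  next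
    case (Suc k)
    then show ?case using balance[of "Suc k"] by (simp add: distrib_left)
  qed
  show ?thesis
  proof (induction k)
    case (Suc k)
    have "\<pi> (Suc k) = \<pi> k * (b k / d (Suc k))"
      using detailed_balance[of k] d_pos[of k] by (simp add: eq_divide_eq)
    then show ?case using Suc by (simp add: bd_weight_Suc)
  qed (simp add: bd_weight_def)
qed

lemma bd_stationary_normalized_weight:
  assumes d0: "d 0 = 0" and d_pos: "\<And>k. d (Suc k) > 0"
    and w_nonneg: "\<And>k. 0 \<le> bd_weight b d k" and w_summable: "summable (bd_weight b d)"
  shows "bd_stationary b d (\<lambda>k. bd_weight b d k / suminf (bd_weight b d))"
proof -
  define S where "S = suminf (bd_weight b d)"
  have "sum (bd_weight b d) {0} \<le> S"
    unfolding S_def by (rule sum_le_suminf[OF w_summable]) (auto simp: w_nonneg)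
  then have S_pos: "S > 0" by (simp add: bd_weight_def)
  define \<pi> where "\<pi> k = bd_weight b d k / S" for k
  have detailed_balance: "\<pi> (Suc k) * d (Suc k) = \<pi> k * b k" for k
    using d_pos[of k] by (simp add: \<pi>_def bd_weight_Suc field_simps)
  have "bd_stationary b d \<pi>"
    unfolding bd_stationary_def
  proof (intro conjI allI)
    show "0 \<le> \<pi> k" for k using w_nonneg S_pos by (simp add: \<pi>_def)
    show "\<pi> sums 1"
      unfolding \<pi>_def using sums_divide[OF summable_sums[OF w_summable], of S] S_pos
      by (simp add: S_def)
    show "(if k = 0 then 0 else \<pi> (k - 1) * b (k - 1)) + \<pi> (k + 1) * d (k + 1)
        = \<pi> k * (b k + d k)" for k
      using detailed_balance[of k] d0 by (cases k) (auto simp: detailed_balance distrib_left)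
  qed
  then show ?thesis unfolding \<pi>_def[abs_def] S_def .
qed

lemma bd_stationary_exists_iff:
  assumes d0: "d 0 = 0" and d_pos: "\<And>k. d (Suc k) > 0"
  shows "(\<exists>\<pi>. bd_stationary b d \<pi>) \<longleftrightarrow> (\<forall>k. 0 \<le> bd_weight b d k) \<and> summable (bd_weight b d)"
proof
  assume "\<exists>\<pi>. bd_stationary b d \<pi>"
  then obtain \<pi> where \<pi>: "bd_stationary b d \<pi>" by blast
  then have nonneg: "\<And>k. 0 \<le> \<pi> k" and sums1: "\<pi> sums 1"
    unfolding bd_stationary_def by auto
  have \<pi>_eq: "\<pi> k = \<pi> 0 * bd_weight b d k" for k
    using bd_stationary_eq_weight[OF d0 d_pos \<pi>] .
  have "\<pi> 0 \<noteq> 0"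
  proof
    assume "\<pi> 0 = 0"
    then have "\<pi> = (\<lambda>_. 0)" using \<pi>_eq by (metis mult_zero_left)
    then show False using sums1 sums_unique2[OF _ sums_zero] by fastforce
  qed
  then have \<pi>0: "\<pi> 0 > 0" using nonneg[of 0] by linarith
  have "bd_weight b d = (\<lambda>k. \<pi> k / \<pi> 0)"
  proof
    show "bd_weight b d k = \<pi> k / \<pi> 0" for k using \<pi>_eq[of k] \<pi>0 by simp
  qed
  then show "(\<forall>k. 0 \<le> bd_weight b d k) \<and> summable (bd_weight b d)"
    using nonneg \<pi>0 sums_summable[OF sums1] by simp
next
  assume "(\<forall>k. 0 \<le> bd_weight b d k) \<and> summable (bd_weight b d)"
  then show "\<exists>\<pi>. bd_stationary b d \<pi>" using bd_stationary_normalized_weight[OF d0 d_pos] by blast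
qed

lemma stationary_exists_iff_summable:
  assumes s: "1 \<le> s" and p_nonneg: "\<And>k. 0 \<le> p k"
  shows "stationary_exists s \<rho> p \<longleftrightarrow> 0 \<le> \<rho> \<and> summable (\<lambda>n. \<rho> ^ n * (\<Prod>j<n. p j))"
proof -
  define w where "w = bd_weight (queue_birth s \<rho> p) (queue_death s)"
  have "stationary_exists s \<rho> p \<longleftrightarrow> (\<forall>k. 0 \<le> w k) \<and> summable w"
    unfolding stationary_exists_def w_def
    by (rule bd_stationary_exists_iff) (use s in \<open>auto simp: queue_death_def\<close>)
  moreover have "(\<forall>k. 0 \<le> w k) \<longleftrightarrow> 0 \<le> \<rho>"
  proof
    assume "\<forall>k. 0 \<le> w k"
    then have "0 \<le> w 1" by blast
    then show "0 \<le> \<rho>"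
      using s by (simp add: w_def bd_weight_def queue_birth_def queue_death_def zero_le_mult_iff)
  next
    assume "0 \<le> \<rho>"
    then show "\<forall>k. 0 \<le> w k"
      unfolding w_def bd_weight_def using p_nonneg
      by (auto intro!: prod_nonneg simp: queue_birth_def queue_death_def)
  qed
  moreover have "summable w \<longleftrightarrow> summable (\<lambda>n. \<rho> ^ n * (\<Prod>j<n. p j))" if \<rho>: "0 \<le> \<rho>"
  proof -
    have w_shift: "w (n + s) = w s * (\<rho> ^ n * (\<Prod>j<n. p j))" for n
      by (induction n)
        (use s in \<open>simp_all add: w_def bd_weight_def lessThan_Suc queue_birth_def queue_death_def\<close>)
    have "summable w \<longleftrightarrow> summable (\<lambda>n. w s * (\<rho> ^ n * (\<Prod>j<n. p j)))"
      by (subst summable_iff_shift[symmetric, of _ s]) (simp add: w_shift)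
    moreover have "w s > 0" if "\<rho> > 0"
      unfolding w_def bd_weight_def using s that
      by (intro prod_pos) (auto simp: queue_birth_def queue_death_def)
    \<comment> \<open>for \<open>\<rho> = 0\<close> the factor \<open>w s\<close> vanishes, but then both series are trivially summable\<close>
    ultimately show ?thesis
      using \<rho> by (cases "\<rho> = 0") (auto simp: mult.commute[of "0 ^ _"])
  qed
  ultimately show ?thesis by blast
qed

lemma prod_lessThan_eq_of_prod_atMost:
  fixes p g :: "nat \<Rightarrow> 'a::comm_monoid_mult"
  assumes "\<And>n. (\<Prod>i\<in>{0..n}. p i) = g (n + 1)" and "g 0 = 1"
  shows "(\<Prod>i<n. p i) = g n"
  using assms by (cases n) (auto simp: atLeast0AtMost lessThan_Suc_atMost)

lemma pos_of_prod_lessThan_pos: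
  fixes p :: "nat \<Rightarrow> 'a::linordered_idom"
  assumes "\<And>n. 0 < (\<Prod>i<n. p i)"
  shows "0 < p k"
  using assms[of k] assms[of "Suc k"] by (simp add: lessThan_Suc zero_less_mult_iff)

lemma not_summable_ge_one:
  fixes f :: "nat \<Rightarrow> real"
  assumes "\<And>n. 1 \<le> f n"
  shows "\<not> summable f"
proof
  assume "summable f"
  then have "f \<longlonglongrightarrow> 0" by (rule summable_LIMSEQ_zero)
  then have "1 \<le> (0::real)" by (rule LIMSEQ_le_const) (use assms in auto)
  then show False by simp
qed

lemma summable_prod_lessThan:
  fixes q :: "nat \<Rightarrow> real"
  assumes \<theta>: "\<theta> < 1" and eventually_le: "\<And>n. N \<le> n \<Longrightarrow> q n \<le> \<theta>"
    and nonneg: "\<And>n. 0 \<le> q n"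
  shows "summable (\<lambda>n. \<Prod>j<n. q j)"
proof (rule summable_ratio_test[OF \<theta>])
  fix n assume "N \<le> n"
  then show "norm (\<Prod>j<Suc n. q j) \<le> \<theta> * norm (\<Prod>j<n. q j)"
    using mult_right_mono[OF eventually_le[OF \<open>N \<le> n\<close>], of "\<Prod>j<n. q j"] nonneg
    by (simp add: lessThan_Suc prod_nonneg abs_of_nonneg)
qed

lemma not_summable_prod_lessThan:
  fixes q :: "nat \<Rightarrow> real"
  assumes "\<And>n. 1 \<le> q n"
  shows "\<not> summable (\<lambda>n. \<Prod>j<n. q j)"
  by (rule not_summable_ge_one) (simp add: assms prod_ge_1)

locale monotone_hazard =
  fixes a :: "real \<Rightarrow> real"
  assumes nonneg: "\<forall>x\<ge>0. 0 \<le> a x"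
    and mono: "mono_on {0..} a"
begin

definition cum_hazard :: "real \<Rightarrow> real" where
  "cum_hazard x = integral {0..x} a"

definition sup_hazard :: ereal where
  "sup_hazard = (SUP x\<in>{0..}. ereal (a x))"

lemma integrable_hazard: "0 \<le> u \<Longrightarrow> a integrable_on {u..v}"
  by (rule integrable_on_mono_on, rule mono_on_subset[OF mono]) auto

lemma cum_hazard_nonneg: "0 \<le> x \<Longrightarrow> 0 \<le> cum_hazard x"
  unfolding cum_hazard_def using nonneg by (intro integral_nonneg integrable_hazard) auto

lemma cum_hazard_lower_bound:
  assumes "0 \<le> x0" "0 \<le> x"
  shows "a x0 * (x - x0) \<le> cum_hazard x"
proof (cases "x \<le> x0")
  case True
  then show ?thesis
    using nonneg assms cum_hazard_nonneg[OF assms(2)] by (smt (verit) mult_nonneg_nonpos)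
next
  case False
  have "cum_hazard x = cum_hazard x0 + integral {x0..x} a"
    unfolding cum_hazard_def
    by (rule Henstock_Kurzweil_Integration.integral_combine[symmetric])
      (use False assms in \<open>auto intro: integrable_hazard\<close>)
  moreover have "a x0 * (x - x0) = integral {x0..x} (\<lambda>_. a x0)" using False by simp
  moreover have "integral {x0..x} (\<lambda>_. a x0) \<le> integral {x0..x} a"
    using assms mono by (intro integral_le integrable_hazard) (auto simp: mono_on_def)
  ultimately show ?thesis using cum_hazard_nonneg[OF assms(1)] by linarith
qed

lemma cum_hazard_upper_bound:
  assumes "\<forall>y\<ge>0. a y \<le> m" "0 \<le> x"
  shows "cum_hazard x \<le> m * x"
proof -
  have "integral {0..x} a \<le> integral {0..x} (\<lambda>_. m)"
    using assms by (intro integral_le integrable_hazard) auto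
  then show ?thesis using assms by (simp add: cum_hazard_def mult.commute)
qed

lemma ctrl_f_eq: "ctrl_f a x = exp (- cum_hazard x)"
  by (simp add: ctrl_f_def cum_hazard_def)

lemma sup_hazard_nonneg: "0 \<le> sup_hazard"
  unfolding sup_hazard_def using nonneg by (intro SUP_upper2[of 0]) auto

lemma less_sup_hazard_iff: "ereal u < sup_hazard \<longleftrightarrow> (\<exists>x\<ge>0. u < a x)"
  unfolding sup_hazard_def less_SUP_iff by auto

lemma laplace_finiteI:
  assumes "ereal (- \<gamma>) < sup_hazard"
  shows "laplace_finite a \<gamma>"
proof -
  obtain x0 where x0: "0 \<le> x0" "- \<gamma> < a x0" using assms less_sup_hazard_iff by blast
  define \<delta> where "\<delta> = \<gamma> + a x0"
  have \<delta>: "\<delta> > 0" using x0 by (simp add: \<delta>_def)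
  have "exp (- \<gamma> * x) * ctrl_f a x \<le> exp (a x0 * x0) * exp (- \<delta> * x)" if "0 \<le> x" for x
  proof -
    have "- \<gamma> * x + - cum_hazard x \<le> a x0 * x0 + - \<delta> * x"
      using cum_hazard_lower_bound[OF x0(1) that] by (simp add: \<delta>_def algebra_simps)
    then show ?thesis by (simp only: ctrl_f_eq mult_exp_exp exp_le_cancel_iff)
  qed
  then have "(\<integral>\<^sup>+ x \<in> {0..}. ennreal (exp (- \<gamma> * x) * ctrl_f a x) \<partial>lborel)
      \<le> (\<integral>\<^sup>+ x. ennreal (indicator {0..} x * (exp (a x0 * x0) * exp (- \<delta> * x))) \<partial>lborel)"
    by (intro nn_integral_mono) (auto simp: indicator_def intro!: ennreal_leI)
  also have "\<dots> = ennreal (exp (a x0 * x0) * (exp (- \<delta> * 0) / \<delta>))"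
    by (intro nn_integral_has_integral_lebesgue has_integral_mult_right
        has_integral_exp_minus_to_infinity \<delta>) simp
  finally show "laplace_finite a \<gamma>"
    unfolding laplace_finite_def using ennreal_less_top by (simp add: le_less_trans)
qed

lemma laplace_finiteD:
  assumes finite: "laplace_finite a \<gamma>"
  shows "ereal (- \<gamma>) < sup_hazard"
proof (rule ccontr)
  assume "\<not> ereal (- \<gamma>) < sup_hazard"
  then have bounded: "\<forall>x\<ge>0. a x \<le> - \<gamma>" unfolding less_sup_hazard_iff by (simp add: not_less)
  define I where "I = (\<integral>\<^sup>+ x \<in> {0..}. ennreal (exp (- \<gamma> * x) * ctrl_f a x) \<partial>lborel)"
  have "ennreal (real n) \<le> I" for n :: nat
  proof -
    have "ennreal (real n) = (\<integral>\<^sup>+ x. indicator {0..real n} x \<partial>lborel)" by simp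
    also have "\<dots> \<le> I" unfolding I_def
    proof (intro nn_integral_mono)
      fix x :: real
      show "indicator {0..real n} x \<le> ennreal (exp (- \<gamma> * x) * ctrl_f a x) * indicator {0..} x"
      proof (cases "0 \<le> x")
        case True
        have "0 \<le> - \<gamma> * x + - cum_hazard x"
          using cum_hazard_upper_bound[OF bounded True] by simp
        then have "1 \<le> exp (- \<gamma> * x) * ctrl_f a x"
          by (simp only: ctrl_f_eq mult_exp_exp one_le_exp_iff)
        then show ?thesis using True by (simp add: indicator_def)
      qed (simp add: indicator_def)
    qed
    finally show ?thesis .
  qed
  moreover have "I < top" using finite unfolding laplace_finite_def I_def by simp
  then obtain r where "0 \<le> r" "I = ennreal r" unfolding less_top_ennreal by blast
  ultimately have "real n \<le> r" for n :: nat by simp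
  then show False using reals_Archimedean2[of r] not_le by blast
qed

lemma laplace_finite_iff: "laplace_finite a \<gamma> \<longleftrightarrow> ereal (- \<gamma>) < sup_hazard"
  using laplace_finiteI laplace_finiteD by blast

lemma gamma_min_eq: "gamma_min a = - sup_hazard"
proof -
  have "{ereal \<gamma> | \<gamma>. laplace_finite a \<gamma>} = {ereal \<gamma> | \<gamma>. - sup_hazard < ereal \<gamma>}"
    unfolding laplace_finite_iff by (metis ereal_uminus_less_reorder uminus_ereal.simps(1))
  also have "Inf \<dots> = - sup_hazard"
  proof (rule antisym)
    show "Inf {ereal \<gamma> |\<gamma>. - sup_hazard < ereal \<gamma>} \<le> - sup_hazard"
      unfolding Inf_le_iff using ereal_dense2 by blast
  qed (auto intro: Inf_greatest)
  finally show ?thesis unfolding gamma_min_def .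
qed

lemma summable_global_control_iff_ln:
  assumes r: "r > 0" and \<rho>: "\<rho> > 0"
  shows "summable (\<lambda>n. \<rho> ^ n * ctrl_f a (real n / r)) \<longleftrightarrow> ereal (r * ln \<rho>) < sup_hazard"
proof -
  define u where "u = r * ln \<rho>"
  have term_eq: "\<rho> ^ n * ctrl_f a (real n / r) = exp (u * (real n / r) + - cum_hazard (real n / r))" for n
  proof -
    have "\<rho> ^ n = exp (real n * ln \<rho>)" using \<rho> by (simp add: exp_of_nat_mult)
    also have "real n * ln \<rho> = u * (real n / r)" using r by (simp add: u_def)
    finally show ?thesis by (simp only: ctrl_f_eq mult_exp_exp)
  qed
  show ?thesis unfolding u_def[symmetric]
  proof
    assume "ereal u < sup_hazard"
    then obtain x0 where x0: "0 \<le> x0" "u < a x0" using less_sup_hazard_iff by blast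
    define q where "q = exp ((u - a x0) / r)"
    have q: "norm q < 1" using x0 r by (simp add: q_def divide_neg_pos)
    have "norm (\<rho> ^ n * ctrl_f a (real n / r)) \<le> exp (a x0 * x0) * q ^ n" for n
    proof -
      have "a x0 * (real n / r - x0) \<le> cum_hazard (real n / r)"
        using cum_hazard_lower_bound[OF x0(1), of "real n / r"] r by simp
      moreover have "real n * ((u - a x0) / r) = u * (real n / r) - a x0 * (real n / r)"
        using r by (simp add: field_simps)
      ultimately have "u * (real n / r) + - cum_hazard (real n / r) \<le> a x0 * x0 + real n * ((u - a x0) / r)"
        by (simp only: right_diff_distrib)
      then have "exp (u * (real n / r) + - cum_hazard (real n / r))
          \<le> exp (a x0 * x0 + real n * ((u - a x0) / r))" by simp
      then show ?thesis
        unfolding term_eq q_def by (simp only: exp_add exp_of_nat_mult) simp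
    qed
    then show "summable (\<lambda>n. \<rho> ^ n * ctrl_f a (real n / r))"
      by (rule summable_comparison_test'[OF summable_mult[OF summable_geometric[OF q]]])
  next
    assume summable: "summable (\<lambda>n. \<rho> ^ n * ctrl_f a (real n / r))"
    show "ereal u < sup_hazard"
    proof (rule ccontr)
      assume "\<not> ereal u < sup_hazard"
      then have "\<forall>x\<ge>0. a x \<le> u" using less_sup_hazard_iff by (auto simp: not_less)
      then have "1 \<le> \<rho> ^ n * ctrl_f a (real n / r)" for n
        using cum_hazard_upper_bound[of u "real n / r"] r unfolding term_eq by simp
      then have "\<not> summable (\<lambda>n. \<rho> ^ n * ctrl_f a (real n / r))" by (rule not_summable_ge_one)
      then show False using summable by blast
    qed
  qed
qed

lemma summable_global_control_iff:
  assumes r: "r > 0" and \<rho>: "0 \<le> \<rho>"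
  shows "summable (\<lambda>n. \<rho> ^ n * ctrl_f a (real n / r)) \<longleftrightarrow>
    gamma_min a = - \<infinity> \<or> \<rho> < exp (- real_of_ereal (gamma_min a) / r)"
proof (cases "\<rho> = 0")
  case False
  then have \<rho>_pos: "\<rho> > 0" using \<rho> by simp
  show ?thesis
  proof (cases sup_hazard)
    case (real \<alpha>)
    have "\<rho> < exp (\<alpha> / r) \<longleftrightarrow> r * ln \<rho> < \<alpha>"
      using \<rho>_pos r by (metis exp_less_cancel_iff exp_ln mult.commute pos_less_divide_eq)
    then show ?thesis using summable_global_control_iff_ln[OF r \<rho>_pos] real by (simp add: gamma_min_eq)
  qed (use summable_global_control_iff_ln[OF r \<rho>_pos] sup_hazard_nonneg in \<open>auto simp: gamma_min_eq\<close>)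
qed (simp add: mult.commute[of "0 ^ _"])

lemma summable_local_control_iff:
  assumes r: "r > 0" and \<rho>: "0 \<le> \<rho>"
  shows "summable (\<lambda>n. \<rho> ^ n * (\<Prod>j<n. 1 / (1 + a (real (j + 1) / r) / r)))
     \<longleftrightarrow> ereal \<rho> < 1 - gamma_min a / ereal r"
proof -
  define q where "q j = \<rho> / (1 + a (real (j + 1) / r) / r)" for j
  have denom_pos: "0 < 1 + a (real (j + 1) / r) / r" for j
    using nonneg r by (simp add: add_pos_nonneg)
  have "\<rho> ^ n * (\<Prod>j<n. 1 / (1 + a (real (j + 1) / r) / r)) = (\<Prod>j<n. q j)" for n
    by (simp add: q_def prod.distrib divide_inverse)
  moreover have "summable (\<lambda>n. \<Prod>j<n. q j) \<longleftrightarrow> ereal (r * (\<rho> - 1)) < sup_hazard"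
  proof
    assume "ereal (r * (\<rho> - 1)) < sup_hazard"
    then obtain x0 where x0: "0 \<le> x0" "r * (\<rho> - 1) < a x0" using less_sup_hazard_iff by blast
    have denom0_pos: "0 < 1 + a x0 / r" using nonneg x0 r by (simp add: add_pos_nonneg)
    show "summable (\<lambda>n. \<Prod>j<n. q j)"
    proof (rule summable_prod_lessThan)
      show "\<rho> / (1 + a x0 / r) < 1" using x0 r denom0_pos by (simp add: field_simps)
      show "0 \<le> q n" for n using \<rho> denom_pos[of n] by (simp add: q_def)
      fix n assume "nat \<lceil>x0 * r\<rceil> \<le> n"
      then have "x0 \<le> real (n + 1) / r" using r by (simp add: field_simps)
      then have "a x0 \<le> a (real (n + 1) / r)" using mono x0 by (auto simp: mono_on_def)
      then show "q n \<le> \<rho> / (1 + a x0 / r)"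
        unfolding q_def using r \<rho> denom0_pos by (intro frac_le) (auto simp: divide_right_mono)
    qed
  next
    assume "summable (\<lambda>n. \<Prod>j<n. q j)"
    then show "ereal (r * (\<rho> - 1)) < sup_hazard"
    proof (rule contrapos_pp)
      assume "\<not> ereal (r * (\<rho> - 1)) < sup_hazard"
      then have "\<forall>x\<ge>0. a x \<le> r * (\<rho> - 1)" using less_sup_hazard_iff by (auto simp: not_less)
      then have "1 \<le> q j" for j
        using denom_pos[of j] r unfolding q_def by (simp add: field_simps)
      then show "\<not> summable (\<lambda>n. \<Prod>j<n. q j)" by (rule not_summable_prod_lessThan)
    qed
  qed
  moreover have "ereal (r * (\<rho> - 1)) < sup_hazard \<longleftrightarrow> ereal \<rho> < 1 - gamma_min a / ereal r"
  proof (cases sup_hazard)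
    case (real \<alpha>)
    have "r * (\<rho> - 1) < \<alpha> \<longleftrightarrow> \<rho> < 1 + \<alpha> / r" using r by (simp add: field_simps)
    then show ?thesis using real r by (simp add: gamma_min_eq one_ereal_def)
  qed (use sup_hazard_nonneg r in \<open>auto simp: gamma_min_eq\<close>)
  ultimately show ?thesis by simp
qed


lemma stationary_exists_global_control_iff:
  assumes s: "1 \<le> s"
    and p: "\<forall>n. (\<Prod>i\<in>{0..n}. p i) = ctrl_f a (real (n + 1) / sqrt (real s))"
  shows "stationary_exists s \<rho> p \<longleftrightarrow> 0 \<le> \<rho> \<and> (gamma_min a = -\<infinity> \<or>
    \<rho> < exp (- real_of_ereal (gamma_min a) / sqrt (real s)))"
proof -
  have prod_p: "(\<Prod>i<n. p i) = ctrl_f a (real n / sqrt (real s))" for n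
    using p by (intro prod_lessThan_eq_of_prod_atMost[where g = "\<lambda>n. ctrl_f a (real n / sqrt s)"])
      (auto simp: ctrl_f_def)
  have "0 < p k" for k by (rule pos_of_prod_lessThan_pos) (simp add: prod_p ctrl_f_def)
  then have "stationary_exists s \<rho> p
      \<longleftrightarrow> 0 \<le> \<rho> \<and> summable (\<lambda>n. \<rho> ^ n * ctrl_f a (real n / sqrt (real s)))"
    using stationary_exists_iff_summable[OF s less_imp_le] by (simp only: prod_p)
  then show ?thesis using summable_global_control_iff[of "sqrt (real s)"] s by auto
qed

lemma stationary_exists_local_control_iff:
  assumes s: "1 \<le> s"
  shows "stationary_exists s \<rho> (\<lambda>k. 1 / (1 + a (real (k + 1) / sqrt s) / sqrt s))
    \<longleftrightarrow> 0 \<le> \<rho> \<and> ereal \<rho> < 1 - gamma_min a / ereal (sqrt s)"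
proof -
  have "0 \<le> 1 / (1 + a (real (k + 1) / sqrt s) / sqrt s)" for k using nonneg by simp
  then show ?thesis
    using stationary_exists_iff_summable[OF s] summable_local_control_iff[of "sqrt (real s)"] s
    by auto
qed

end

lemma exp_inverse_sqrt_minus_linear_bigo:
  fixes c :: real
  shows "(\<lambda>s::nat. exp (c / sqrt (real s)) - (1 + c / sqrt (real s))) \<in> O(\<lambda>s. 1 / real s)"
  by real_asymp

theorem proposition3p1:
  fixes a :: "real \<Rightarrow> real"
  assumes a_nonneg: "\<forall>x\<ge>0. 0 \<le> a x"
    and a_mono: "mono_on {0..} a"
  shows "(\<forall>s::nat. s \<ge> 1 \<longrightarrow> (\<forall>\<rho>::real.
            (\<forall>p. (\<forall>n. (\<Prod>i\<in>{0..n}. p i) = ctrl_f a (real (n + 1) / sqrt (real s))) \<longrightarrow>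
               (stationary_exists s \<rho> p \<longleftrightarrow>
                  0 \<le> \<rho> \<and> (gamma_min a = -\<infinity> \<or>
                     \<rho> < exp (- real_of_ereal (gamma_min a) / sqrt (real s)))))
          \<and> (stationary_exists s \<rho>
                (\<lambda>k. 1 / (1 + a (real (k + 1) / sqrt (real s)) / sqrt (real s)))
               \<longleftrightarrow> 0 \<le> \<rho> \<and> ereal \<rho> < 1 - gamma_min a / ereal (sqrt (real s)))))
       \<and> (gamma_min a \<noteq> -\<infinity> \<longrightarrow>
            (\<lambda>s::nat. exp (- real_of_ereal (gamma_min a) / sqrt (real s))
                      - (1 - real_of_ereal (gamma_min a) / sqrt (real s)))
            \<in> O(\<lambda>s. 1 / real s))"
proof -
  interpret monotone_hazard a using assms by unfold_locales
  show ?thesis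
    using stationary_exists_global_control_iff stationary_exists_local_control_iff
      exp_inverse_sqrt_minus_linear_bigo[of "- real_of_ereal (gamma_min a)"]
    by simp
qed

end
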